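(* If the radius of convergence of $G(t)=\sum_{k\ge0}\mu_k t^k$ is strictly smaller than $q/(1-q)$, then the parking process is supercritical.
   Context: Fix $q\in(1/2,1)$. Let $\mathcal T$ be a Bienaymé–Galton–Watson plane tree rooted at $\varnothing$ with geometric offspring distribution $\nu(k)=q^k(1-q)$, $k\ge 0$. Let $\mu$ be a probability law on $\{0,1,2,\dots\}$ with $\mu(\{0,1\})<1$, $\mu_k=\mu(\{k\})$. Conditionally on $\mathcal T$, let $(A_u)_{u\in\mathcal T}$ be i.i.d. with law $\mu$ (numbers of cars arriving at the vertices). Parking rule: each vertex can hold at most one car; each car goes to its arrival vertex, parks there if free, otherwise drives towards the root and parks at the first free vertex on its way; if none, it exits through the root. For $n\ge0$, park only the cars arriving at vertices of height at most $n$ and let $X_n(u)$ be the number of cars visiting $u$; $X(u)=\lim_n X_n(u)\in\{0,1,\dots\}\cup\{\infty\}$, $X:=X(\varnothing)$. The parking process is subcritical if $X<\infty$ a.s. and supercritical otherwise. *)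

theory Defs
  imports "HOL-Probability.Probability"
begin

text \<open>Vertices are Ulam-Harris words (nat lists); the root is the empty list and the
children of u are u @ [i]. A sample point w assigns to every word u a pair
(number of children K u, number of arriving cars A u). The GW tree consists of the words
u = [i1,...,ik] with i(j+1) < K [i1,...,ij] for all j.\<close>

text \<open>park_visits d w u = number of cars visiting u when only cars arriving at vertices of the
subtree of u within distance d from u are parked. A car leaves the subtree of a child v of u
(and hence visits u) iff it visits v and v is already occupied, so the flow from v to u is
max(X(v)-1,0) (truncated subtraction on nat).\<close>
fun park_visits :: "nat \<Rightarrow> (nat list \<Rightarrow> nat \<times> nat) \<Rightarrow> nat list \<Rightarrow> nat" where
  "park_visits 0 w u = snd (w u)"
| "park_visits (Suc d) w u =
     snd (w u) + (\<Sum>i<fst (w u). park_visits d w (u @ [i]) - 1)"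

definition X_n :: "nat \<Rightarrow> (nat list \<Rightarrow> nat \<times> nat) \<Rightarrow> nat" where
  "X_n n w = park_visits n w []"

text \<open>X = lim X_n (X_n is nondecreasing in n, so the limit is the supremum).\<close>
definition X_root :: "(nat list \<Rightarrow> nat \<times> nat) \<Rightarrow> enat" where
  "X_root w = (SUP n. enat (X_n n w))"

definition parking_space :: "nat pmf \<Rightarrow> nat pmf \<Rightarrow> (nat list \<Rightarrow> nat \<times> nat) measure" where
  "parking_space nu mu = (\<Pi>\<^sub>M u\<in>(UNIV :: nat list set). measure_pmf (pair_pmf nu mu))"

definition supercritical :: "nat pmf \<Rightarrow> nat pmf \<Rightarrow> bool" where
  "supercritical nu mu \<longleftrightarrow> \<not> (AE w in parking_space nu mu. X_root w < \<infinity>)"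

end

theory Submission
  imports Defs
begin

text \<open>
Call a configuration (n, L)-sparse if every vertex at height j \<le> n receives fewer than L + j cars.
If it is not, some vertex at height j receives at least L + j cars; each of the j vertices below the
root on its path keeps at most one of them, so at least L of them visit the root. By independence of
the root and its subtrees, the probability p n L of sparseness satisfies
p (n + 1) L \<le> G\<nu>(p n (L + 1)), with G\<nu> the generating function of \<nu>. For the geometric law
this becomes the linear recursion 1 / (1 - p (n + 1) L) \<le> c / (1 - p n (L + 1)) + 1 with
c = (1 - q) / q < 1. Hence 1 - p n L \<ge> \<delta> > 0 whenever \<mu>(L + n) \<ge> c ^ n, and a radius of
convergence below 1 / c provides such an n for every L. So X \<ge> L with probability at least \<delta>
for every L.
\<close>

definition subtree :: "nat \<Rightarrow> (nat list \<Rightarrow> nat \<times> nat) \<Rightarrow> (nat list \<Rightarrow> nat \<times> nat)" where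
  "subtree i w = (\<lambda>v. w (i # v))"

fun sparse :: "nat \<Rightarrow> nat \<Rightarrow> (nat list \<Rightarrow> nat \<times> nat) \<Rightarrow> bool" where
  "sparse 0 L w \<longleftrightarrow> snd (w []) < L"
| "sparse (Suc n) L w \<longleftrightarrow> snd (w []) < L \<and> (\<forall>i < fst (w []). sparse n (Suc L) (subtree i w))"

lemma park_visits_Cons: "park_visits d w (i # u) = park_visits d (subtree i w) u"
  by (induction d arbitrary: u) (simp_all add: subtree_def)

lemma cars_le_X_n: "snd (w []) \<le> X_n n w"
  by (cases n) (simp_all add: X_n_def)

lemma X_n_subtree_le:
  assumes "i < fst (w [])"
  shows "X_n n (subtree i w) - 1 \<le> X_n (Suc n) w"
proof -
  have "X_n n (subtree i w) - 1 = park_visits n w [i] - 1"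
    by (simp add: X_n_def park_visits_Cons)
  also have "\<dots> \<le> (\<Sum>j<fst (w []). park_visits n w [j] - 1)"
    by (rule member_le_sum) (use assms in auto)
  also have "\<dots> = X_n (Suc n) w - snd (w [])"
    by (simp add: X_n_def)
  finally show ?thesis by simp
qed

lemma X_n_ge_if_not_sparse: "\<not> sparse n L w \<Longrightarrow> L \<le> X_n n w"
proof (induction n arbitrary: L w)
  case 0
  then show ?case using cars_le_X_n[of w 0] by simp
next
  case (Suc n)
  show ?case
  proof (cases "snd (w []) < L")
    case False
    then show ?thesis using cars_le_X_n[of w "Suc n"] by simp
  next
    case True
    then obtain i where i: "i < fst (w [])" "\<not> sparse n (Suc L) (subtree i w)"
      using Suc.prems by auto
    then show ?thesis using Suc.IH[OF i(2)] X_n_subtree_le[of i w n, OF i(1)] by linarith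
  qed
qed

lemma X_root_ge_if_not_sparse: "\<not> sparse n L w \<Longrightarrow> enat L \<le> X_root w"
  unfolding X_root_def by (meson SUP_upper2 UNIV_I X_n_ge_if_not_sparse enat_ord_simps(1))

lemma sparse_Suc_threshold: "sparse n L w \<Longrightarrow> sparse n (Suc L) w"
  by (induction n arbitrary: L w) auto

lemma prob_space_parking_space: "prob_space (parking_space nu mu)"
  by (simp add: parking_space_def prob_space_PiM prob_space_measure_pmf)

lemma space_parking_space [simp]: "space (parking_space nu mu) = UNIV"
  by (simp add: parking_space_def space_PiM)

lemma measurable_coordinate:
  "(\<lambda>w. w v) \<in> measurable (parking_space nu mu) (measure_pmf (pair_pmf nu mu))"
  unfolding parking_space_def by measurable

lemma distr_coordinate:
  "distr (parking_space nu mu) (pair_pmf nu mu) (\<lambda>w. w v) = measure_pmf (pair_pmf nu mu)"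
  unfolding parking_space_def
  by (rule distr_PiM_component) (auto simp: prob_space_measure_pmf)

lemma measurable_subtree:
  "subtree i \<in> measurable (parking_space nu mu) (parking_space nu mu)"
  unfolding parking_space_def subtree_def
  by (rule measurable_PiM_single') (auto simp: space_PiM)

lemma distr_subtree:
  "distr (parking_space nu mu) (parking_space nu mu) (subtree i) = parking_space nu mu"
proof -
  have "subtree i = (\<lambda>w v. w (i # v))"
    by (simp add: fun_eq_iff subtree_def)
  then show ?thesis
    using distr_PiM_reindex[of UNIV "\<lambda>_. measure_pmf (pair_pmf nu mu)" "Cons i" UNIV]
    by (simp add: parking_space_def restrict_UNIV prob_space_measure_pmf)
qed

lemma measure_subtree_vimage:
  assumes "S \<in> sets (parking_space nu mu)"
  shows "measure (parking_space nu mu) (subtree i -` S) = measure (parking_space nu mu) S"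
  using measure_distr[OF measurable_subtree assms, of i] by (simp add: distr_subtree)

lemma measure_root_vimage:
  "measure (parking_space nu mu) ((\<lambda>w. w []) -` A) = measure (pair_pmf nu mu) A"
  using measure_distr[OF measurable_coordinate, of A] by (simp add: distr_coordinate)

lemma indep_coordinates:
  "prob_space.indep_vars (parking_space nu mu) (\<lambda>_. pair_pmf nu mu) (\<lambda>v w. w v) UNIV"
proof -
  interpret prob_space "parking_space nu mu" by (rule prob_space_parking_space)
  show ?thesis
    by (subst indep_vars_iff_distr_eq_PiM[OF _ measurable_coordinate])
      (simp_all add: restrict_UNIV distr_coordinate, simp add: parking_space_def)
qed

definition root_or_subtree :: "nat option \<Rightarrow> nat list set" where
  "root_or_subtree j = (case j of None \<Rightarrow> {[]} | Some i \<Rightarrow> range (Cons i))"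

lemma indep_root_subtrees:
  "prob_space.indep_vars (parking_space nu mu) (\<lambda>_. parking_space nu mu)
     (\<lambda>j w. case j of None \<Rightarrow> (\<lambda>_. w []) | Some i \<Rightarrow> subtree i w) UNIV"
proof -
  interpret prob_space "parking_space nu mu" by (rule prob_space_parking_space)
  define Y where "Y j r = (case j of None \<Rightarrow> (\<lambda>_. r []) | Some i \<Rightarrow> subtree i r)"
    for j :: "nat option" and r :: "nat list \<Rightarrow> nat \<times> nat"
  have "disjoint_family_on root_or_subtree UNIV"
    unfolding disjoint_family_on_def root_or_subtree_def by (auto split: option.splits)
  then have "indep_vars (\<lambda>j. PiM (root_or_subtree j) (\<lambda>_. pair_pmf nu mu))
      (\<lambda>j w. restrict w (root_or_subtree j)) UNIV"
    using indep_vars_restrict[OF indep_coordinates] by simp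
  moreover have
    "Y j \<in> measurable (PiM (root_or_subtree j) (\<lambda>_. pair_pmf nu mu)) (parking_space nu mu)" for j
    unfolding Y_def parking_space_def subtree_def root_or_subtree_def
    by (cases j; simp; rule measurable_PiM_single') (auto simp: space_PiM)
  ultimately have "indep_vars (\<lambda>_. parking_space nu mu)
      (\<lambda>j w. Y j (restrict w (root_or_subtree j))) UNIV"
    by (rule indep_vars_compose2)
  moreover have "(\<lambda>j w. Y j (restrict w (root_or_subtree j))) =
      (\<lambda>j w. case j of None \<Rightarrow> (\<lambda>_. w []) | Some i \<Rightarrow> subtree i w)"
    by (auto simp: fun_eq_iff Y_def root_or_subtree_def subtree_def split: option.split)
  ultimately show ?thesis by simp
qed

lemma measure_pair_pmf_fst: "measure (pair_pmf nu mu) {x. fst x = k} = pmf nu k"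
proof -
  have "measure (pair_pmf nu mu) {x. fst x = k} = measure (map_pmf fst (pair_pmf nu mu)) {k}"
    by (simp add: vimage_def)
  then show ?thesis by (simp add: map_fst_pair_pmf measure_pmf_single)
qed

lemma sets_root_vimage: "(\<lambda>w. w []) -` A \<in> sets (parking_space nu mu)"
  using measurable_sets[OF measurable_coordinate[of "[]" nu mu], of A] by simp

lemma measure_root_degree_subtrees:
  assumes S: "S \<in> sets (parking_space nu mu)"
  shows "measure (parking_space nu mu) {w. fst (w []) = k \<and> (\<forall>i<k. subtree i w \<in> S)}
       = pmf nu k * measure (parking_space nu mu) S ^ k"
proof -
  interpret prob_space "parking_space nu mu" by (rule prob_space_parking_space)
  define X where "X j w = (case j of None \<Rightarrow> (\<lambda>_. w []) | Some i \<Rightarrow> subtree i w)"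
    for j :: "nat option" and w :: "nat list \<Rightarrow> nat \<times> nat"
  define A where "A j = (case j of None \<Rightarrow> {f. fst (f []) = k} | Some i \<Rightarrow> S)"
    for j :: "nat option"
  have X_Some: "X (Some i) = subtree i" for i
    by (simp add: X_def fun_eq_iff)
  define J where "J = insert None (Some ` {..<k})"
  have root_event: "{f :: nat list \<Rightarrow> nat \<times> nat. fst (f []) = k} \<in> events"
    using sets_root_vimage[of "{x. fst x = k}"] by (simp add: vimage_def)
  have "prob (\<Inter>j\<in>J. X j -` A j \<inter> space (parking_space nu mu))
      = (\<Prod>j\<in>J. prob (X j -` A j \<inter> space (parking_space nu mu)))"
    using indep_root_subtrees[of nu mu, folded X_def]
    by (rule indep_varsD) (auto simp: J_def A_def S root_event split: option.splits)
  moreover have "(\<Inter>j\<in>J. X j -` A j \<inter> space (parking_space nu mu))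
      = {w. fst (w []) = k \<and> (\<forall>i<k. subtree i w \<in> S)}"
    by (auto simp: J_def A_def X_def)
  moreover have "X None -` A None = (\<lambda>w. w []) -` {x. fst x = k}"
    by (auto simp: X_def A_def)
  then have "(\<Prod>j\<in>J. prob (X j -` A j \<inter> space (parking_space nu mu)))
      = prob ((\<lambda>w. w []) -` {x. fst x = k}) * (\<Prod>i<k. prob (subtree i -` S))"
    by (simp add: J_def prod.reindex A_def X_Some)
  moreover have "prob ((\<lambda>w. w []) -` {x. fst x = k}) = pmf nu k"
    unfolding measure_root_vimage by (rule measure_pair_pmf_fst)
  ultimately show ?thesis
    by (simp add: measure_subtree_vimage[OF S])
qed

lemma measurable_sparse: "Measurable.pred (parking_space nu mu) (sparse n L)"
proof (induction n arbitrary: L)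
  case 0
  show ?case using measurable_coordinate[of "[]" nu mu] by simp
next
  case (Suc n)
  have "Measurable.pred (parking_space nu mu) (\<lambda>w. sparse n (Suc L) (subtree i w))" for i
    using measurable_compose[OF measurable_subtree Suc.IH] by simp
  moreover have "(\<lambda>w. w []) \<in> measurable (parking_space nu mu) (count_space UNIV)"
    unfolding parking_space_def by measurable
  ultimately show ?case by simp measurable
qed

lemma sets_sparse: "{w. sparse n L w} \<in> sets (parking_space nu mu)"
  using measurable_sparse by (simp add: pred_def)

lemma measure_sparse_Suc_le:
  "measure (parking_space nu mu) {w. sparse (Suc n) L w}
     \<le> (\<Sum>k. pmf nu k * measure (parking_space nu mu) {w. sparse n (Suc L) w} ^ k)"
proof -
  interpret prob_space "parking_space nu mu" by (rule prob_space_parking_space)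
  let ?S = "{w. sparse n (Suc L) w}"
  define B where "B k = {w. fst (w []) = k \<and> (\<forall>i<k. subtree i w \<in> ?S)}" for k
  have "B k \<in> events" for k
  proof -
    have "B k = {w. fst (w []) = k} \<inter> (\<Inter>i<k. subtree i -` ?S)"
      by (auto simp: B_def)
    moreover have "{w :: nat list \<Rightarrow> nat \<times> nat. fst (w []) = k} \<in> events"
      using sets_root_vimage[of "{x. fst x = k}"] by (simp add: vimage_def)
    moreover have "subtree i -` ?S \<in> events" for i
      using measurable_sets[OF measurable_subtree sets_sparse] by simp
    ultimately show ?thesis
      by (cases "k = 0") (auto intro: sets.finite_INT)
  qed
  moreover have "disjoint_family B"
    unfolding disjoint_family_on_def B_def by auto
  ultimately have "(\<lambda>k. prob (B k)) sums prob (\<Union>k. B k)"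
    by (intro measure_UNION) auto
  moreover have "prob (B k) = pmf nu k * prob ?S ^ k" for k
    unfolding B_def by (rule measure_root_degree_subtrees[OF sets_sparse])
  moreover have "prob {w. sparse (Suc n) L w} \<le> prob (\<Union>k. B k)"
    using \<open>\<And>k. B k \<in> events\<close> by (intro finite_measure_mono) (auto simp: B_def)
  ultimately show ?thesis by (simp add: sums_iff)
qed

definition nonsparse_prob :: "nat pmf \<Rightarrow> nat pmf \<Rightarrow> nat \<Rightarrow> nat \<Rightarrow> real" where
  "nonsparse_prob nu mu n L = 1 - measure (parking_space nu mu) {w. sparse n L w}"

lemma pmf_le_nonsparse_prob_0: "pmf mu L \<le> nonsparse_prob nu mu 0 L"
proof -
  have "measure (parking_space nu mu) {w. sparse 0 L w} = measure (pair_pmf nu mu) {x. snd x < L}"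
    using measure_root_vimage[of nu mu "{x. snd x < L}"] by (simp add: vimage_def)
  also have "\<dots> = measure (map_pmf snd (pair_pmf nu mu)) {..<L}"
    by (simp add: vimage_def lessThan_def)
  also have "\<dots> = measure mu ({..<L} \<union> {L}) - pmf mu L"
    by (subst measure_pmf.finite_measure_Union) (auto simp: map_snd_pair_pmf measure_pmf_single)
  also have "\<dots> \<le> 1 - pmf mu L"
    by (simp add: measure_pmf.prob_le_1)
  finally show ?thesis by (simp add: nonsparse_prob_def)
qed

lemma suminf_geometric_pmf_power:
  fixes q p :: real
  assumes q: "0 < q" "q < 1" and nu: "\<And>k. pmf nu k = q ^ k * (1 - q)"
    and p: "0 \<le> p" "p \<le> 1"
  shows "(\<Sum>k. pmf nu k * p ^ k) = (1 - q) / (1 - q * p)"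
proof -
  have "q * p \<le> q * 1"
    using q p by (intro mult_left_mono) auto
  moreover have "0 \<le> q * p"
    using q p by simp
  ultimately have "\<bar>q * p\<bar> < 1"
    using q by linarith
  then have "(\<lambda>k. (1 - q) * (q * p) ^ k) sums ((1 - q) * (1 / (1 - q * p)))"
    by (intro sums_mult geometric_sums) simp
  then show ?thesis
    by (simp add: sums_iff nu power_mult_distrib mult_ac)
qed

lemma reciprocal_complement_step:
  fixes q p p' :: real
  assumes q: "0 < q" "q < 1" and p: "0 \<le> p" "p < 1" and p': "p' \<le> (1 - q) / (1 - q * p)"
  shows "0 < 1 - p'" "1 / (1 - p') \<le> (1 - q) / q / (1 - p) + 1"
proof -
  have "q * p \<le> q * 1"
    using q p by (intro mult_left_mono) auto
  then have qp: "0 < 1 - q * p"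
    using q by linarith
  have lower: "q * (1 - p) / (1 - q * p) \<le> 1 - p'"
  proof -
    have "q * (1 - p) / (1 - q * p) = 1 - (1 - q) / (1 - q * p)"
      using qp by (simp add: field_simps)
    then show ?thesis using p' by linarith
  qed
  moreover have pos: "0 < q * (1 - p) / (1 - q * p)"
    using q p qp by simp
  ultimately show "0 < 1 - p'" by linarith
  have "1 / (1 - p') \<le> 1 / (q * (1 - p) / (1 - q * p))"
    using lower pos by (intro divide_left_mono mult_pos_pos) linarith+
  also have "\<dots> = (1 - q) / q / (1 - p) + 1"
    using q p qp by (simp add: field_simps)
  finally show "1 / (1 - p') \<le> (1 - q) / q / (1 - p) + 1" .
qed

lemma nonsparse_prob_Suc_geometric:
  fixes q :: real
  assumes q: "0 < q" "q < 1" and nu: "\<And>k. pmf nu k = q ^ k * (1 - q)"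
    and pos: "0 < nonsparse_prob nu mu n (Suc L)"
  shows "0 < nonsparse_prob nu mu (Suc n) L \<and>
    1 / nonsparse_prob nu mu (Suc n) L \<le> (1 - q) / q / nonsparse_prob nu mu n (Suc L) + 1"
proof -
  let ?p = "measure (parking_space nu mu) {w. sparse n (Suc L) w}"
  have p: "0 \<le> ?p" "?p < 1"
    using pos by (auto simp: nonsparse_prob_def)
  have "measure (parking_space nu mu) {w. sparse (Suc n) L w} \<le> (\<Sum>k. pmf nu k * ?p ^ k)"
    by (rule measure_sparse_Suc_le)
  also have "\<dots> = (1 - q) / (1 - q * ?p)"
    using p by (intro suminf_geometric_pmf_power[OF q nu]) simp_all
  finally have "measure (parking_space nu mu) {w. sparse (Suc n) L w} \<le> (1 - q) / (1 - q * ?p)"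
    .
  from reciprocal_complement_step[OF q p this] show ?thesis
    by (simp add: nonsparse_prob_def)
qed

lemma reciprocal_iteration_bound:
  fixes h :: "nat \<Rightarrow> nat \<Rightarrow> real" and c x :: real
  assumes c: "0 < c" "c < 1"
    and step: "\<And>n L. 0 < h n (Suc L) \<Longrightarrow>
      0 < h (Suc n) L \<and> 1 / h (Suc n) L \<le> c / h n (Suc L) + 1"
    and x: "0 < x" "x \<le> h 0 (L + n)"
  shows "0 < h n L \<and> 1 / h n L \<le> c ^ n / x + 1 / (1 - c)"
  using x
proof (induction n arbitrary: L)
  case 0
  then have "0 < h 0 L" "1 / h 0 L \<le> 1 / x"
    by (auto intro: divide_left_mono)
  moreover have "0 \<le> 1 / (1 - c)"
    using c by simp
  ultimately show ?case
    by (simp only: power_0 add_increasing2)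
next
  case (Suc n)
  then have IH: "0 < h n (Suc L)" "1 / h n (Suc L) \<le> c ^ n / x + 1 / (1 - c)"
    using Suc.IH[of "Suc L"] by simp_all
  have "1 / h (Suc n) L \<le> c * (1 / h n (Suc L)) + 1"
    using step[OF IH(1)] by simp
  also have "\<dots> \<le> c * (c ^ n / x + 1 / (1 - c)) + 1"
    using IH(2) c by (intro add_right_mono mult_left_mono) auto
  also have "\<dots> = c ^ Suc n / x + 1 / (1 - c)"
    using c by (simp add: field_simps)
  finally show ?case using step[OF IH(1)] by simp
qed

lemma conv_radius_lt_imp_frequent:
  fixes a :: "nat \<Rightarrow> 'a :: {banach, real_normed_div_algebra}"
  assumes r: "0 < r" and radius: "conv_radius a < ereal r"
  shows "\<exists>k\<ge>L. (1 / r) ^ (k - L) \<le> norm (a k)"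
proof (rule ccontr)
  assume "\<not> ?thesis"
  then have small: "norm (a k) < (1 / r) ^ (k - L)" if "k \<ge> L" for k
    using that by (meson not_le)
  have "ereal r \<le> conv_radius a"
  proof (rule conv_radius_geI_ex')
    fix s :: real
    assume s: "0 < s" "ereal s < ereal r"
    have "summable (\<lambda>n. r ^ L * (s / r) ^ n)"
      using s r by (intro summable_mult summable_geometric) simp
    then show "summable (\<lambda>n. a n * of_real s ^ n)"
    proof (rule summable_comparison_test')
      fix n
      assume n: "L \<le> n"
      have "norm (a n) \<le> r ^ L / r ^ n"
        using small[OF n] r n by (simp add: power_diff power_divide)
      then have "norm (a n) * s ^ n \<le> r ^ L / r ^ n * s ^ n"
        using s by (intro mult_right_mono) auto
      then show "norm (a n * of_real s ^ n) \<le> r ^ L * (s / r) ^ n"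
        using s by (simp add: norm_mult norm_power power_divide)
    qed
  qed
  with radius show False by simp
qed

lemma supercritical_if_nonsparse_prob_ge:
  assumes \<delta>: "0 < \<delta>" and nonsparse: "\<And>L. \<exists>n. \<delta> \<le> nonsparse_prob nu mu n L"
  shows "supercritical nu mu"
proof -
  interpret prob_space "parking_space nu mu" by (rule prob_space_parking_space)
  define A where "A L = (\<Union>n. - {w. sparse n L w})" for L
  have "- {w. sparse n L w} \<in> events" for n L
    using sets.compl_sets[OF sets_sparse] by (simp add: Compl_eq_Diff_UNIV)
  then have A_events: "A L \<in> events" for L
    unfolding A_def by (intro sets.countable_UN') auto
  have "\<delta> \<le> prob (A L)" for L
  proof -
    obtain n where "\<delta> \<le> nonsparse_prob nu mu n L"
      using nonsparse by blast
    also have "nonsparse_prob nu mu n L = prob (- {w. sparse n L w})"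
      using prob_compl[OF sets_sparse] by (simp add: nonsparse_prob_def Compl_eq_Diff_UNIV)
    also have "\<dots> \<le> prob (A L)"
      using A_events by (intro finite_measure_mono) (auto simp: A_def)
    finally show ?thesis .
  qed
  moreover have "decseq A"
    by (rule decseq_SucI) (auto simp: A_def dest: sparse_Suc_threshold)
  then have "(\<lambda>L. prob (A L)) \<longlonglongrightarrow> prob (\<Inter>L. A L)"
    using A_events by (intro finite_Lim_measure_decseq) auto
  ultimately have pos: "0 < prob (\<Inter>L. A L)"
    using \<delta> LIMSEQ_le_const by fastforce
  have infinite: "X_root w = \<infinity>" if "w \<in> (\<Inter>L. A L)" for w
  proof (cases "X_root w")
    case (enat m)
    from that obtain n where "\<not> sparse n (Suc m) w"
      by (auto simp: A_def)
    with enat show ?thesis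
      using X_root_ge_if_not_sparse by fastforce
  qed
  show ?thesis
    unfolding supercritical_def
  proof
    assume "AE w in parking_space nu mu. X_root w < \<infinity>"
    then have "AE w in parking_space nu mu. w \<notin> (\<Inter>L. A L)"
      by eventually_elim (use infinite in force)
    then have "emeasure (parking_space nu mu) (\<Inter>L. A L) = 0"
      using A_events by (subst (asm) AE_iff_measurable) auto
    with pos show False
      by (simp add: measure_def)
  qed
qed

lemma nonsparse_prob_lower_bound_geometric:
  fixes q :: real
  assumes q: "1/2 < q" "q < 1" and nu: "\<And>k. pmf nu k = q ^ k * (1 - q)"
    and radius: "conv_radius (\<lambda>k. pmf mu k) < ereal (q / (1 - q))"
  shows "\<exists>n. (2 * q - 1) / (3 * q - 1) \<le> nonsparse_prob nu mu n L"
proof -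
  define c where "c = (1 - q) / q"
  have c: "0 < c" "c < 1"
    using q by (auto simp: c_def field_simps)
  have step: "0 < nonsparse_prob nu mu (Suc n) L \<and>
      1 / nonsparse_prob nu mu (Suc n) L \<le> c / nonsparse_prob nu mu n (Suc L) + 1"
    if "0 < nonsparse_prob nu mu n (Suc L)" for n L
    unfolding c_def using q that by (intro nonsparse_prob_Suc_geometric nu) auto
  obtain k where k: "k \<ge> L" "c ^ (k - L) \<le> pmf mu k"
    using conv_radius_lt_imp_frequent[of "q / (1 - q)" "\<lambda>k. pmf mu k" L] q radius
    by (auto simp: c_def)
  then have "0 < pmf mu k"
    using c by (meson less_le_trans zero_less_power)
  then have "0 < nonsparse_prob nu mu (k - L) L \<and>
      1 / nonsparse_prob nu mu (k - L) L \<le> c ^ (k - L) / pmf mu k + 1 / (1 - c)"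
    using k by (intro reciprocal_iteration_bound[where h = "nonsparse_prob nu mu", OF c step])
      (auto intro: pmf_le_nonsparse_prob_0)
  moreover have "c ^ (k - L) / pmf mu k \<le> 1"
    using k \<open>0 < pmf mu k\<close> by simp
  moreover have "1 + 1 / (1 - c) = (3 * q - 1) / (2 * q - 1)"
    using q by (simp add: c_def field_simps)
  ultimately have "1 / nonsparse_prob nu mu (k - L) L \<le> (3 * q - 1) / (2 * q - 1)"
    and "0 < 1 / nonsparse_prob nu mu (k - L) L"
    by auto
  then show ?thesis
    using le_imp_inverse_le by (fastforce simp: inverse_eq_divide)
qed

theorem mainTheorem3:
  fixes q :: real and nu mu :: "nat pmf"
  assumes q: "1/2 < q" "q < 1"
    and nu: "\<And>k. pmf nu k = q ^ k * (1 - q)"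
    and mu01: "pmf mu 0 + pmf mu 1 < 1"
    and radius: "conv_radius (\<lambda>k. pmf mu k) < ereal (q / (1 - q))"
  shows "supercritical nu mu"
proof (rule supercritical_if_nonsparse_prob_ge)
  show "0 < (2 * q - 1) / (3 * q - 1)"
    using q by simp
  show "\<exists>n. (2 * q - 1) / (3 * q - 1) \<le> nonsparse_prob nu mu n L" for L
    using nonsparse_prob_lower_bound_geometric[OF q nu radius] .
qed

end
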